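(* For every configuration $\mathcal{C}$ of $d$ doors, $\mathrm{Price}(\mathcal{C})\le d$, where $\mathrm{Price}(\mathcal{C})=\mathbb{T}_{\mathcal{C}}\big/\sum_{i=1}^d E_i$.
   Context: Dependent doors model. Fix an integer $d\ge 2$ and doors $1,\dots,d$, all initially closed; once a door opens it stays open forever. A configuration $\mathcal{C}$ specifies for each door $i$ a function $\phi_i^{\mathcal{C}}$ mapping every finite nonempty sequence $(X_1,\dots,X_n)$ of subsets of $\{1,\dots,i-1\}$ to $[0,1]$: $\phi_i^{\mathcal{C}}(X_1,\dots,X_n)$ is the probability that door $i$ has opened during $n$ knocks on it, where $X_j$ is the set of open doors among $\{1,\dots,i-1\}$ at the time of the $j$-th knock on door $i$ (so a closed door $i$ opens at its $n$-th knock with conditional probability $(\phi_i(X_1..X_n)-\phi_i(X_1..X_{n-1}))/(1-\phi_i(X_1..X_{n-1}))$, with $\phi_i$ of the empty sequence equal to $0$). Configurations are assumed monotone ($\phi_i(X')\le\phi_i(X)$ whenever $X'$ is a, not necessarily consecutive, subsequence of $X$) and positively correlated ($\phi_i(X'_1,\dots,X'_n)\le\phi_i(X_1,\dots,X_n)$ whenever $X'_j\subseteq X_j$ for all $j$). The fundamental distribution of door $i$ is $p_i(n)=1-\phi_i(\{1,\dots,i-1\}^n)$ ($p_i(0)=1$), and $E_i=\sum_{n\ge0}p_i(n)$ is assumed finite. A knock sequence $\pi$ is an infinite sequence of door indices, executed in order without any feedback; $\mathbb{T}_{\mathcal{C}}(\pi)$ is the expected number of knocks until all $d$ doors are open, and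 $\mathbb{T}_{\mathcal{C}}=\inf_\pi \mathbb{T}_{\mathcal{C}}(\pi)$. *)

theory Defs
  imports "HOL-Probability.Probability" "HOL-Library.Sublist"
begin

text \<open>Doors are 1..d. A configuration is given by phi :: nat => nat set list => real,
  where phi i xs is the probability that door i has opened during length xs knocks,
  xs listing the sets of open doors among 1..i-1 at the times of these knocks.\<close>

definition valid_seq :: "nat \<Rightarrow> nat set list \<Rightarrow> bool" where
  "valid_seq i xs \<longleftrightarrow> xs \<noteq> [] \<and> set xs \<subseteq> Pow {1..<i}"

definition phi0 :: "(nat \<Rightarrow> nat set list \<Rightarrow> real) \<Rightarrow> nat \<Rightarrow> nat set list \<Rightarrow> real" where
  "phi0 phi i xs = (if xs = [] then 0 else phi i xs)"

definition fund :: "(nat \<Rightarrow> nat set list \<Rightarrow> real) \<Rightarrow> nat \<Rightarrow> nat \<Rightarrow> real" where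
  "fund phi i n = (if n = 0 then 1 else 1 - phi i (replicate n {1..<i}))"

definition E_door :: "(nat \<Rightarrow> nat set list \<Rightarrow> real) \<Rightarrow> nat \<Rightarrow> real" where
  "E_door phi i = (\<Sum>n. fund phi i n)"

definition config :: "nat \<Rightarrow> (nat \<Rightarrow> nat set list \<Rightarrow> real) \<Rightarrow> bool" where
  "config d phi \<longleftrightarrow> (\<forall>i\<in>{1..d}.
     (\<forall>xs. valid_seq i xs \<longrightarrow> 0 \<le> phi i xs \<and> phi i xs \<le> 1)
   \<and> (\<forall>xs ys. valid_seq i xs \<and> valid_seq i ys \<and> subseq ys xs \<longrightarrow> phi i ys \<le> phi i xs)
   \<and> (\<forall>xs ys. valid_seq i xs \<and> valid_seq i ys \<and> list_all2 (\<subseteq>) ys xs \<longrightarrow> phi i ys \<le> phi i xs)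
   \<and> summable (fund phi i))"

text \<open>Distribution of the history [S_0, ..., S_t] of open-door sets after t knocks
  following knock sequence ks (knock number s, 0-indexed, is on door ks s and sees state S_s).\<close>
fun hist :: "(nat \<Rightarrow> nat set list \<Rightarrow> real) \<Rightarrow> (nat \<Rightarrow> nat) \<Rightarrow> nat \<Rightarrow> nat set list pmf" where
  "hist phi ks 0 = return_pmf [{}]"
| "hist phi ks (Suc t) = bind_pmf (hist phi ks t) (\<lambda>h.
     let i = ks t; S = last h in
     if i \<in> S then return_pmf (h @ [S])
     else let xs = [h ! s \<inter> {1..<i}. s \<leftarrow> [0..<Suc t], ks s = i];
              prev = phi0 phi i (butlast xs);
              cur = phi i xs
          in map_pmf (\<lambda>b. h @ [if b then insert i S else S])
                     (bernoulli_pmf ((cur - prev) / (1 - prev))))"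

text \<open>Expected number of knocks until all doors are open: sum over t of P(not all open after t knocks).\<close>
definition exp_time :: "nat \<Rightarrow> (nat \<Rightarrow> nat set list \<Rightarrow> real) \<Rightarrow> (nat \<Rightarrow> nat) \<Rightarrow> ennreal" where
  "exp_time d phi ks = (\<Sum>t. ennreal (measure_pmf.prob (hist phi ks t) {h. last h \<noteq> {1..d}}))"

definition opt_time :: "nat \<Rightarrow> (nat \<Rightarrow> nat set list \<Rightarrow> real) \<Rightarrow> ennreal" where
  "opt_time d phi = (INF ks \<in> {ks. \<forall>t. ks t \<in> {1..d}}. exp_time d phi ks)"

definition price :: "nat \<Rightarrow> (nat \<Rightarrow> nat set list \<Rightarrow> real) \<Rightarrow> ennreal" where
  "price d phi = opt_time d phi / ennreal (\<Sum>i=1..d. E_door phi i)"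

end

theory Submission
  imports Defs
begin

text \<open>Knock round-robin: 1, 2, \<dots>, d, 1, 2, \<dots>. Conditionally on the history of the doors
  below j, door j is still closed after t knocks with probability 1 - \<phi>_j(X_1, \<dots>, X_n), where
  X_1, \<dots>, X_n are the sets of open lower doors seen at its knocks so far. If doors 1, \<dots>, j-1
  are all open at the start of round r, every later knock on j sees all of them, so by monotonicity
  under subsequences the probability that at the start of round k \<ge> r the doors below j are open
  and j is closed is at most p_j(k - r). Summing over k gives at most E_j, and summing over j, the
  expected number of round starts at which not all doors are open is at most \<Sum>E_j. A round has
  d knocks, so the expected time is at most d \<Sum>E_j.\<close>

lemma last_eq_nth: "length xs = Suc n \<Longrightarrow> last xs = xs ! n"
  by (cases xs rule: rev_cases) auto

lemma nn_integral_pmf_cong: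
  "(\<And>x. x \<in> set_pmf M \<Longrightarrow> f x = g x) \<Longrightarrow> (\<integral>\<^sup>+x. f x \<partial>measure_pmf M) = (\<integral>\<^sup>+x. g x \<partial>measure_pmf M)"
  by (intro nn_integral_cong_AE) (simp add: AE_measure_pmf_iff)

lemma nn_integral_pmf_mono:
  "(\<And>x. x \<in> set_pmf M \<Longrightarrow> f x \<le> g x) \<Longrightarrow> (\<integral>\<^sup>+x. f x \<partial>measure_pmf M) \<le> (\<integral>\<^sup>+x. g x \<partial>measure_pmf M)"
  by (intro nn_integral_mono_AE) (simp add: AE_measure_pmf_iff)

text \<open>For prev = 1 the quotient is 0 by division by zero, and then cur = 1.\<close>

lemma hazard_rate:
  fixes prev cur :: real
  assumes "0 \<le> prev" "prev \<le> cur" "cur \<le> 1"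
  defines "q \<equiv> (cur - prev) / (1 - prev)"
  shows "0 \<le> q" "q \<le> 1" "ennreal (1 - q) * ennreal (1 - prev) = ennreal (1 - cur)"
proof -
  have "(0 \<le> q \<and> q \<le> 1) \<and> (1 - q) * (1 - prev) = 1 - cur"
  proof (cases "prev = 1")
    case True
    then show ?thesis
      using assms by (simp add: q_def)
  next
    case False
    then show ?thesis
      using assms by (auto simp: q_def field_simps)
  qed
  moreover have "0 \<le> 1 - prev"
    using assms by simp
  ultimately show "0 \<le> q" "q \<le> 1" "ennreal (1 - q) * ennreal (1 - prev) = ennreal (1 - cur)"
    by (simp_all add: ennreal_mult[symmetric])
qed

lemma sum_shifted_le_suminf:
  fixes f :: "nat \<Rightarrow> real"
  assumes "\<And>n. 0 \<le> f n" "summable f"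
  shows "(\<Sum>k<K. if r \<le> k then f (k - r) else 0) \<le> suminf f"
proof -
  have "(\<Sum>k<K. if r \<le> k then f (k - r) else 0) = (\<Sum>n<K - r. f n)"
    by (induction K) (auto simp: Suc_diff_le)
  also have "\<dots> \<le> suminf f"
    using assms by (intro sum_le_suminf) auto
  finally show ?thesis .
qed

lemma sum_lessThan_mult_div:
  fixes F :: "nat \<Rightarrow> 'a::semiring_1"
  shows "(\<Sum>t<n*d. F (t div d)) = of_nat d * (\<Sum>k<n. F k)"
proof -
  have "(\<Sum>t<n*d. F (t div d)) = (\<Sum>k<n. \<Sum>t=k*d..<k*d+d. F (t div d))"
    by (rule sum.nat_group[symmetric])
  also have "\<dots> = (\<Sum>k<n. \<Sum>t=k*d..<k*d+d. F k)"
  proof (intro sum.cong refl)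
    fix k t assume "t \<in> {k*d..<k*d+d}"
    then have "t div d = k"
      by (auto intro: div_nat_eqI simp: mult.commute)
    then show "F (t div d) = F k"
      by simp
  qed
  also have "\<dots> = of_nat d * (\<Sum>k<n. F k)"
    by (simp add: sum_distrib_left)
  finally show ?thesis .
qed

section \<open>Histories\<close>

definition knock_step :: "(nat \<Rightarrow> nat set list \<Rightarrow> real) \<Rightarrow> (nat \<Rightarrow> nat) \<Rightarrow> nat \<Rightarrow> nat set list \<Rightarrow> nat set list pmf" where
  "knock_step phi ks t h = (let i = ks t; S = last h in
     if i \<in> S then return_pmf (h @ [S])
     else let xs = [h ! s \<inter> {1..<i}. s \<leftarrow> [0..<Suc t], ks s = i];
              prev = phi0 phi i (butlast xs);
              cur = phi i xs
          in map_pmf (\<lambda>b. h @ [if b then insert i S else S])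
                     (bernoulli_pmf ((cur - prev) / (1 - prev))))"

lemma hist_Suc: "hist phi ks (Suc t) = bind_pmf (hist phi ks t) (knock_step phi ks t)"
  unfolding hist.simps knock_step_def[abs_def] ..

declare hist.simps(2)[simp del]

lemma set_pmf_knock_step:
  assumes "h' \<in> set_pmf (knock_step phi ks t h)"
  obtains S' where "h' = h @ [S']" "last h \<subseteq> S'" "S' \<subseteq> insert (ks t) (last h)"
  using assms unfolding knock_step_def Let_def
  by (cases "ks t \<in> last h") (auto intro: that split: if_splits)

lemma set_pmf_hist:
  assumes "h \<in> set_pmf (hist phi ks t)"
  shows "length h = Suc t \<and> (\<forall>s s'. s \<le> s' \<longrightarrow> s' \<le> t \<longrightarrow> h ! s \<subseteq> h ! s')
    \<and> (\<forall>s\<le>t. h ! s \<subseteq> ks ` {..<t})"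
  using assms
proof (induction t arbitrary: h)
  case (Suc t)
  then obtain h0 S' where h0: "h0 \<in> set_pmf (hist phi ks t)" and h: "h = h0 @ [S']"
    and S': "last h0 \<subseteq> S'" "S' \<subseteq> insert (ks t) (last h0)"
    by (auto simp: hist_Suc elim: set_pmf_knock_step)
  note IH = Suc.IH[OF h0]
  have h_nth: "h ! s = (if s \<le> t then h0 ! s else S')" if "s \<le> Suc t" for s
    using IH that by (auto simp: h nth_append)
  have last_h0: "last h0 = h0 ! t"
    using IH by (simp add: last_eq_nth)
  have below_S': "h ! s \<subseteq> S'" if "s \<le> Suc t" for s
  proof (cases "s \<le> t")
    case True
    then have "h0 ! s \<subseteq> h0 ! t"
      using IH by blast
    then show ?thesis
      using S'(1) h_nth[OF that] True unfolding last_h0 by simp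
  qed (use h_nth[OF that] in simp)
  have "h0 ! t \<subseteq> ks ` {..<t}"
    using IH by blast
  then have S'_knocked: "S' \<subseteq> ks ` {..<Suc t}"
    using S'(2) unfolding last_h0 lessThan_Suc by auto
  show ?case
  proof (intro conjI allI impI)
    show "length h = Suc (Suc t)"
      using IH by (simp add: h)
  next
    fix s s' assume "s \<le> s'" "s' \<le> Suc t"
    then show "h ! s \<subseteq> h ! s'"
      using IH h_nth below_S' by (cases "s' \<le> t") (auto simp: le_Suc_eq)
  next
    fix s assume "s \<le> Suc t"
    then show "h ! s \<subseteq> ks ` {..<Suc t}"
      using below_S' S'_knocked by blast
  qed
qed simp

lemma length_hist: "h \<in> set_pmf (hist phi ks t) \<Longrightarrow> length h = Suc t"
  using set_pmf_hist by blast

lemma hist_nth_mono: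
  "h \<in> set_pmf (hist phi ks t) \<Longrightarrow> s \<le> s' \<Longrightarrow> s' \<le> t \<Longrightarrow> h ! s \<subseteq> h ! s'"
  using set_pmf_hist by blast

lemma last_hist: "h \<in> set_pmf (hist phi ks t) \<Longrightarrow> last h = h ! t"
  using length_hist by (rule last_eq_nth)

lemma last_hist_subset: "h \<in> set_pmf (hist phi ks t) \<Longrightarrow> last h \<subseteq> ks ` {..<t}"
  using set_pmf_hist[of h] last_hist[of h] by auto

lemma map_pmf_take_hist:
  assumes "s \<le> t"
  shows "map_pmf (take (Suc s)) (hist phi ks t) = hist phi ks s"
  using assms
proof (induction t rule: dec_induct)
  case base
  have "map_pmf (take (Suc s)) (hist phi ks s) = map_pmf id (hist phi ks s)"
    by (intro map_pmf_cong) (auto dest: length_hist)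
  then show ?case
    by simp
next
  case (step n)
  have "map_pmf (take (Suc s)) (hist phi ks (Suc n)) =
        bind_pmf (hist phi ks n) (\<lambda>h. map_pmf (take (Suc s)) (knock_step phi ks n h))"
    by (simp add: hist_Suc map_bind_pmf)
  also have "\<dots> = bind_pmf (hist phi ks n) (\<lambda>h. return_pmf (take (Suc s) h))"
    using step.hyps(1) by (intro bind_pmf_cong refl)
      (auto simp: map_pmf_eq_return_pmf_iff dest!: length_hist elim!: set_pmf_knock_step)
  also have "\<dots> = map_pmf (take (Suc s)) (hist phi ks n)"
    by (simp add: map_pmf_def)
  finally show ?case
    using step.IH by simp
qed

lemma nn_integral_hist_Suc:
  "(\<integral>\<^sup>+h. F h \<partial>hist phi ks (Suc t)) = (\<integral>\<^sup>+h. (\<integral>\<^sup>+h'. F h' \<partial>knock_step phi ks t h) \<partial>hist phi ks t)"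
  by (simp add: hist_Suc)

section \<open>The doors below a given door\<close>

definition proj_hist :: "nat set \<Rightarrow> nat set list \<Rightarrow> nat set list" where
  "proj_hist L h = map (\<lambda>S. S \<inter> L) h"

lemma proj_hist_snoc [simp]: "proj_hist L (h @ [S]) = proj_hist L h @ [S \<inter> L]"
  by (simp add: proj_hist_def)

lemma proj_hist_proj_hist [simp]: "proj_hist L (proj_hist L' h) = proj_hist (L \<inter> L') h"
  by (auto simp: proj_hist_def)

lemma last_proj_hist [simp]: "h \<noteq> [] \<Longrightarrow> last (proj_hist L h) = last h \<inter> L"
  by (simp add: proj_hist_def last_map)

lemma length_proj_hist [simp]: "length (proj_hist L h) = length h"
  by (simp add: proj_hist_def)

lemma nth_proj_hist [simp]: "s < length h \<Longrightarrow> proj_hist L h ! s = h ! s \<inter> L"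
  by (simp add: proj_hist_def)

lemma set_proj_hist: "set (proj_hist L h) \<subseteq> Pow L"
  by (auto simp: proj_hist_def)

text \<open>The sequence (X_1, \<dots>, X_n) of the paper for door j: the entries of the history p at the
  knocks on door j before time t.\<close>

definition door_views :: "(nat \<Rightarrow> nat) \<Rightarrow> nat \<Rightarrow> nat \<Rightarrow> nat set list \<Rightarrow> nat set list" where
  "door_views ks j t p = map ((!) p) (filter (\<lambda>s. ks s = j) [0..<t])"

lemma door_views_Suc:
  "door_views ks j (Suc t) p = (if ks t = j then door_views ks j t p @ [p ! t] else door_views ks j t p)"
  by (simp add: door_views_def)

lemma door_views_append: "t \<le> length p \<Longrightarrow> door_views ks j t (p @ q) = door_views ks j t p"
  by (auto simp: door_views_def nth_append)

lemma set_door_views: "t \<le> length p \<Longrightarrow> set (door_views ks j t p) \<subseteq> set p"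
  by (auto simp: door_views_def)

lemma door_views_split:
  "t0 \<le> t \<Longrightarrow> door_views ks j t p = door_views ks j t0 p @ map ((!) p) (filter (\<lambda>s. ks s = j) [t0..<t])"
proof -
  assume "t0 \<le> t"
  then have "[0..<t] = [0..<t0] @ [t0..<t]"
    using upt_add_eq_append[of 0 t0 "t - t0"] by simp
  then show ?thesis
    by (simp add: door_views_def)
qed

lemma knock_views_eq_door_views:
  "Suc t \<le> length h \<Longrightarrow>
   [h ! s \<inter> {1..<i}. s \<leftarrow> [0..<Suc t], ks s = i] = door_views ks i (Suc t) (proj_hist {1..<i} h)"
proof -
  have comprehension: "concat (map (\<lambda>s. if P s then [f s] else []) xs) = map f (filter P xs)"
    for P and f :: "nat \<Rightarrow> nat set" and xs :: "nat list"
    by (induction xs) auto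
  assume "Suc t \<le> length h"
  then show ?thesis
    unfolding comprehension door_views_def by (auto simp del: upt_Suc intro!: map_cong)
qed

lemma knock_step_eq:
  assumes "length h = Suc t"
  shows "knock_step phi ks t h =
    (let i = ks t; S = last h; v = door_views ks i t (proj_hist {1..<i} h) in
     if i \<in> S then return_pmf (h @ [S])
     else map_pmf (\<lambda>b. h @ [if b then insert i S else S])
       (bernoulli_pmf ((phi i (v @ [S \<inter> {1..<i}]) - phi0 phi i v) / (1 - phi0 phi i v))))"
proof -
  define i where "i = ks t"
  have "[h ! s \<inter> {1..<i}. s \<leftarrow> [0..<Suc t], ks s = i] = door_views ks i (Suc t) (proj_hist {1..<i} h)"
    using assms by (intro knock_views_eq_door_views) simp
  also have "\<dots> = door_views ks i t (proj_hist {1..<i} h) @ [last h \<inter> {1..<i}]"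
    using assms by (simp add: door_views_Suc last_eq_nth i_def del: upt_Suc)
  finally show ?thesis
    unfolding knock_step_def Let_def i_def[symmetric] by (simp only: butlast_snoc)
qed

lemma proj_hist_knock_step_outside:
  assumes "h' \<in> set_pmf (knock_step phi ks t h)" "ks t \<notin> L" "h \<noteq> []"
  shows "proj_hist L h' = proj_hist L h @ [last h \<inter> L]"
  using assms(1)
proof (rule set_pmf_knock_step)
  fix S' assume "h' = h @ [S']" "last h \<subseteq> S'" "S' \<subseteq> insert (ks t) (last h)"
  then show ?thesis
    using assms(2) by auto
qed

lemma knock_step_restrict:
  assumes "ks t \<noteq> j" "1 \<le> ks t" "length h = Suc t"
  shows "map_pmf (proj_hist {1..<j}) (knock_step phi ks t h)
       = map_pmf (proj_hist {1..<j}) (knock_step phi ks t (proj_hist {1..<j} h))"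
proof (cases "ks t < j")
  case True
  define i where "i = ks t"
  define L where "L = {1..<j}"
  have "i \<in> L" "{1..<i} \<inter> L = {1..<i}" "L \<inter> {1..<i} = {1..<i}"
    using True assms(2) unfolding i_def L_def by auto
  moreover have "h \<noteq> []"
    using assms(3) by auto
  moreover have "insert i (S \<inter> L) \<inter> L = insert i S \<inter> L" for S
    using \<open>i \<in> L\<close> by auto
  ultimately show ?thesis
    using assms(3) unfolding L_def[symmetric]
    by (auto simp: knock_step_eq Let_def map_pmf_comp Int_assoc if_distrib[of "\<lambda>S. S \<inter> L"]
        simp flip: i_def cong: if_cong)
next
  case False
  then have outside: "ks t \<notin> {1..<j}"
    by simp
  have "map_pmf (proj_hist {1..<j}) (knock_step phi ks t h') = return_pmf (proj_hist {1..<j} h' @ [last h' \<inter> {1..<j}])"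
    if "h' \<noteq> []" for h'
    using proj_hist_knock_step_outside outside that by (simp add: map_pmf_eq_return_pmf_iff)
  then show ?thesis
    using assms(3) by (cases h rule: rev_cases) auto
qed

definition door_survival :: "(nat \<Rightarrow> nat set list \<Rightarrow> real) \<Rightarrow> (nat \<Rightarrow> nat) \<Rightarrow> nat \<Rightarrow> nat \<Rightarrow> nat set list \<Rightarrow> real" where
  "door_survival phi ks j t p = 1 - phi0 phi j (door_views ks j t p)"

definition door_hazard :: "(nat \<Rightarrow> nat set list \<Rightarrow> real) \<Rightarrow> (nat \<Rightarrow> nat) \<Rightarrow> nat \<Rightarrow> nat \<Rightarrow> nat set list \<Rightarrow> real" where
  "door_hazard phi ks j t p =
    (phi j (door_views ks j t p @ [last p]) - phi0 phi j (door_views ks j t p)) / (1 - phi0 phi j (door_views ks j t p))"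

lemma door_survival_Suc_same:
  assumes "ks t = j" "length p = Suc t"
  shows "door_survival phi ks j (Suc t) (p @ [x]) = 1 - phi j (door_views ks j t p @ [last p])"
  using assms by (simp add: door_survival_def door_views_Suc door_views_append phi0_def last_eq_nth nth_append)

lemma knock_step_on_door:
  assumes "ks t = j" "length h = Suc t"
  shows "knock_step phi ks t h = (if j \<in> last h then return_pmf (h @ [last h])
    else map_pmf (\<lambda>b. h @ [if b then insert j (last h) else last h])
      (bernoulli_pmf (door_hazard phi ks j t (proj_hist {1..<j} h))))"
proof -
  have "h \<noteq> []"
    using assms(2) by auto
  then show ?thesis
    using assms by (simp add: knock_step_eq Let_def door_hazard_def)
qed

definition round_robin :: "nat \<Rightarrow> nat \<Rightarrow> nat" where
  "round_robin d t = t mod d + 1"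

lemma round_robin_once_per_round:
  assumes "1 \<le> j" "j \<le> d"
  shows "length (filter (\<lambda>s. round_robin d s = j) [k*d..<k*d+d]) = 1"
proof -
  have "set (filter (\<lambda>s. round_robin d s = j) [k*d..<k*d+d]) = {k*d + (j - 1)}"
  proof (intro set_eqI iffI)
    fix s assume "s \<in> set (filter (\<lambda>s. round_robin d s = j) [k*d..<k*d+d])"
    then have "s = k*d + (s - k*d)" "s - k*d < d" "s mod d = j - 1"
      by (auto simp: round_robin_def)
    then show "s \<in> {k*d + (j - 1)}"
      by (metis mod_less mod_mult_self3 singletonI)
  next
    fix s assume "s \<in> {k*d + (j - 1)}"
    then have s: "s = d*k + (j - 1)"
      by (simp add: mult.commute)
    have "s mod d = (j - 1) mod d"
      unfolding s by (rule mod_mult_self4)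
    also have "\<dots> = j - 1"
      using assms by simp
    finally have "s mod d = j - 1" .
    moreover have "k*d \<le> s" "s < k*d + d"
      using assms unfolding s by (simp_all add: mult.commute)
    ultimately show "s \<in> set (filter (\<lambda>s. round_robin d s = j) [k*d..<k*d+d])"
      using assms by (simp add: round_robin_def)
  qed
  then show ?thesis
    using distinct_card[of "filter (\<lambda>s. round_robin d s = j) [k*d..<k*d+d]"] by simp
qed

lemma length_filter_round_robin:
  assumes "1 \<le> j" "j \<le> d" "r \<le> k"
  shows "length (filter (\<lambda>s. round_robin d s = j) [r*d..<k*d]) = k - r"
  using assms(3)
proof (induction k rule: dec_induct)
  case (step k)
  have "[r*d..<Suc k*d] = [r*d..<k*d] @ [k*d..<k*d+d]"
    using step.hyps(1) upt_add_eq_append[of "r*d" "k*d" d] by (simp add: add.commute)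
  then show ?case
    using step.IH step.hyps(1) round_robin_once_per_round[OF assms(1,2), of k] by simp
qed simp

lemma round_robin_range: "0 < d \<Longrightarrow> round_robin d t \<in> {1..d}"
  by (simp add: round_robin_def Suc_le_eq)

text \<open>A bound on the survival of door j at the start of round k, in terms of the first round r
  at which the doors below j are all open. Only r \<le> k is searched, so that h ! (r * d) stays
  within a history of length k * d + 1.\<close>

definition round_weight :: "(nat \<Rightarrow> nat set list \<Rightarrow> real) \<Rightarrow> nat \<Rightarrow> nat \<Rightarrow> nat \<Rightarrow> nat set list \<Rightarrow> real" where
  "round_weight phi d j k h =
    (if \<exists>r\<le>k. {1..<j} \<subseteq> h ! (r*d) then fund phi j (k - (LEAST r. r \<le> k \<and> {1..<j} \<subseteq> h ! (r*d))) else 0)"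

lemma round_weight_take: "round_weight phi d j k (take (Suc (k*d)) h) = round_weight phi d j k h"
proof -
  have "take (Suc (k*d)) h ! (r*d) = h ! (r*d)" if "r \<le> k" for r
    using that by (simp add: le_imp_less_Suc)
  then have "(\<lambda>r. r \<le> k \<and> {1..<j} \<subseteq> take (Suc (k*d)) h ! (r*d)) = (\<lambda>r. r \<le> k \<and> {1..<j} \<subseteq> h ! (r*d))"
    by auto
  then show ?thesis
    unfolding round_weight_def by (simp only: ex_bool_eq[symmetric] Ex_less_Suc)
qed

section \<open>A single door\<close>

locale door_law =
  fixes phi :: "nat \<Rightarrow> nat set list \<Rightarrow> real" and j :: nat
  assumes phi_range: "valid_seq j xs \<Longrightarrow> 0 \<le> phi j xs \<and> phi j xs \<le> 1"
    and phi_subseq_mono: "valid_seq j xs \<Longrightarrow> valid_seq j ys \<Longrightarrow> subseq ys xs \<Longrightarrow> phi j ys \<le> phi j xs"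
begin

abbreviation lower_hist :: "nat set list \<Rightarrow> nat set list" where
  "lower_hist \<equiv> proj_hist {1..<j}"

lemma phi0_nonneg: "set xs \<subseteq> Pow {1..<j} \<Longrightarrow> 0 \<le> phi0 phi j xs"
  using phi_range by (auto simp: phi0_def valid_seq_def)

lemma phi_snoc_le_1: "set xs \<subseteq> Pow {1..<j} \<Longrightarrow> x \<subseteq> {1..<j} \<Longrightarrow> phi j (xs @ [x]) \<le> 1"
  using phi_range by (simp add: valid_seq_def)

lemma phi0_le_phi_snoc:
  assumes "set xs \<subseteq> Pow {1..<j}" "x \<subseteq> {1..<j}"
  shows "phi0 phi j xs \<le> phi j (xs @ [x])"
proof (cases "xs = []")
  case True
  then show ?thesis
    using phi_range[of "[x]"] assms by (simp add: phi0_def valid_seq_def)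
next
  case False
  have "subseq xs (xs @ [x])"
    using subseq_append'[of xs "[]" "[x]"] by simp
  then show ?thesis
    using False phi_subseq_mono[of "xs @ [x]" xs] assms by (simp add: phi0_def valid_seq_def)
qed

lemma fund_nonneg: "0 \<le> fund phi j n"
  using phi_range[of "replicate n {1..<j}"] by (simp add: fund_def valid_seq_def)

lemma E_door_ge_1:
  assumes "summable (fund phi j)"
  shows "1 \<le> E_door phi j"
proof -
  have "sum (fund phi j) {0} \<le> suminf (fund phi j)"
    by (rule sum_le_suminf[OF assms]) (auto simp: fund_nonneg)
  moreover have "fund phi j 0 = 1"
    by (simp add: fund_def)
  ultimately show ?thesis
    by (simp add: E_door_def)
qed

lemma door_hazard_props:
  fixes ks :: "nat \<Rightarrow> nat"
  assumes "set p \<subseteq> Pow {1..<j}" "length p = Suc t"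
  shows "0 \<le> door_hazard phi ks j t p" "door_hazard phi ks j t p \<le> 1"
    "ennreal (1 - door_hazard phi ks j t p) * ennreal (door_survival phi ks j t p)
      = ennreal (1 - phi j (door_views ks j t p @ [last p]))"
proof -
  have "last p \<in> set p"
    using assms(2) by (intro last_in_set) auto
  then have "set (door_views ks j t p) \<subseteq> Pow {1..<j}" "last p \<subseteq> {1..<j}"
    using assms set_door_views[of t p ks j] by auto
  note bounds = phi0_nonneg[OF this(1)] phi0_le_phi_snoc[OF this] phi_snoc_le_1[OF this]
  show "0 \<le> door_hazard phi ks j t p" "door_hazard phi ks j t p \<le> 1"
    "ennreal (1 - door_hazard phi ks j t p) * ennreal (door_survival phi ks j t p)
      = ennreal (1 - phi j (door_views ks j t p @ [last p]))"
    unfolding door_hazard_def door_survival_def by (fact hazard_rate[OF bounds])+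
qed

lemma survival_step_other:
  fixes f :: "nat set list \<Rightarrow> ennreal"
  assumes knock: "ks t \<noteq> j" "1 \<le> ks t"
    and IH: "\<And>g. (\<integral>\<^sup>+h. g (lower_hist h) * indicator {h. j \<notin> last h} h \<partial>hist phi ks t)
      = (\<integral>\<^sup>+h. g (lower_hist h) * ennreal (door_survival phi ks j t (lower_hist h)) \<partial>hist phi ks t)"
  shows "(\<integral>\<^sup>+h. f (lower_hist h) * indicator {h. j \<notin> last h} h \<partial>hist phi ks (Suc t))
    = (\<integral>\<^sup>+h. f (lower_hist h) * ennreal (door_survival phi ks j (Suc t) (lower_hist h)) \<partial>hist phi ks (Suc t))"
proof -
  define \<Phi> where "\<Phi> p = (\<integral>\<^sup>+p'. f p' \<partial>map_pmf lower_hist (knock_step phi ks t p))" for p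
  have step: "(\<integral>\<^sup>+h'. f (lower_hist h') * c h' \<partial>knock_step phi ks t h) = \<Phi> (lower_hist h) * c h"
    if h: "h \<in> set_pmf (hist phi ks t)"
      and c: "\<And>h'. h' \<in> set_pmf (knock_step phi ks t h) \<Longrightarrow> c h' = c h"
    for h and c :: "nat set list \<Rightarrow> ennreal"
  proof -
    have "(\<integral>\<^sup>+h'. f (lower_hist h') * c h' \<partial>knock_step phi ks t h)
        = (\<integral>\<^sup>+h'. f (lower_hist h') * c h \<partial>knock_step phi ks t h)"
      using c by (intro nn_integral_pmf_cong) simp
    also have "\<dots> = (\<integral>\<^sup>+p'. f p' \<partial>map_pmf lower_hist (knock_step phi ks t h)) * c h"
      by (simp add: nn_integral_multc)
    also have "\<dots> = \<Phi> (lower_hist h) * c h"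
      unfolding \<Phi>_def knock_step_restrict[of ks t j, OF knock length_hist[OF h]] ..
    finally show ?thesis .
  qed
  have views: "door_views ks j (Suc t) p = door_views ks j t p" for p
    using knock(1) by (simp add: door_views_Suc)
  have same_state: "(j \<in> last h' \<longleftrightarrow> j \<in> last h)
      \<and> door_views ks j t (lower_hist h') = door_views ks j t (lower_hist h)"
    if "h \<in> set_pmf (hist phi ks t)" "h' \<in> set_pmf (knock_step phi ks t h)" for h h'
    using that(2)
  proof (rule set_pmf_knock_step)
    fix S' assume "h' = h @ [S']" "last h \<subseteq> S'" "S' \<subseteq> insert (ks t) (last h)"
    then show ?thesis
      using knock(1) length_hist[OF that(1)] by (auto simp: door_views_append)
  qed
  have "(\<integral>\<^sup>+h. f (lower_hist h) * indicator {h. j \<notin> last h} h \<partial>hist phi ks (Suc t))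
      = (\<integral>\<^sup>+h. \<Phi> (lower_hist h) * indicator {h. j \<notin> last h} h \<partial>hist phi ks t)"
    unfolding nn_integral_hist_Suc
    by (intro nn_integral_pmf_cong step) (auto simp: same_state split: split_indicator)
  also have "\<dots> = (\<integral>\<^sup>+h. \<Phi> (lower_hist h) * ennreal (door_survival phi ks j t (lower_hist h)) \<partial>hist phi ks t)"
    by (rule IH)
  also have "\<dots> = (\<integral>\<^sup>+h. \<Phi> (lower_hist h) * ennreal (door_survival phi ks j (Suc t) (lower_hist h)) \<partial>hist phi ks t)"
    by (simp add: door_survival_def views)
  also have "\<dots> = (\<integral>\<^sup>+h. f (lower_hist h) * ennreal (door_survival phi ks j (Suc t) (lower_hist h)) \<partial>hist phi ks (Suc t))"
    unfolding nn_integral_hist_Suc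
    by (intro nn_integral_pmf_cong step[symmetric]) (use same_state in \<open>simp_all add: door_survival_def views\<close>)
  finally show ?thesis .
qed

lemma survival_step_same:
  fixes f :: "nat set list \<Rightarrow> ennreal"
  assumes knock: "ks t = j"
    and IH: "\<And>g. (\<integral>\<^sup>+h. g (lower_hist h) * indicator {h. j \<notin> last h} h \<partial>hist phi ks t)
      = (\<integral>\<^sup>+h. g (lower_hist h) * ennreal (door_survival phi ks j t (lower_hist h)) \<partial>hist phi ks t)"
  shows "(\<integral>\<^sup>+h. f (lower_hist h) * indicator {h. j \<notin> last h} h \<partial>hist phi ks (Suc t))
    = (\<integral>\<^sup>+h. f (lower_hist h) * ennreal (door_survival phi ks j (Suc t) (lower_hist h)) \<partial>hist phi ks (Suc t))"
proof -
  define \<Phi> where "\<Phi> p = f (p @ [last p]) * ennreal (1 - door_hazard phi ks j t p)" for p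
  have hist_facts: "length h = Suc t" "h \<noteq> []" "length (lower_hist h) = Suc t"
    if "h \<in> set_pmf (hist phi ks t)" for h
    using length_hist[OF that] by auto
  note hazard = door_hazard_props[OF set_proj_hist hist_facts(3), of _ ks]
  have lower_step: "lower_hist h' = lower_hist h @ [last (lower_hist h)]"
    if "h \<in> set_pmf (hist phi ks t)" "h' \<in> set_pmf (knock_step phi ks t h)" for h h'
    using proj_hist_knock_step_outside[OF that(2), of "{1..<j}"] hist_facts[OF that(1)] knock by simp
  have "(\<integral>\<^sup>+h. f (lower_hist h) * indicator {h. j \<notin> last h} h \<partial>hist phi ks (Suc t))
      = (\<integral>\<^sup>+h. \<Phi> (lower_hist h) * indicator {h. j \<notin> last h} h \<partial>hist phi ks t)"
    unfolding nn_integral_hist_Suc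
  proof (intro nn_integral_pmf_cong)
    fix h assume h: "h \<in> set_pmf (hist phi ks t)"
    show "(\<integral>\<^sup>+h'. f (lower_hist h') * indicator {h. j \<notin> last h} h' \<partial>knock_step phi ks t h)
        = \<Phi> (lower_hist h) * indicator {h. j \<notin> last h} h"
      using hazard(1,2)[OF h] hist_facts[OF h]
      by (simp add: knock_step_on_door[of ks t j, OF knock] \<Phi>_def insert_absorb)
  qed
  also have "\<dots> = (\<integral>\<^sup>+h. \<Phi> (lower_hist h) * ennreal (door_survival phi ks j t (lower_hist h)) \<partial>hist phi ks t)"
    by (rule IH)
  also have "\<dots> = (\<integral>\<^sup>+h. f (lower_hist h) * ennreal (door_survival phi ks j (Suc t) (lower_hist h)) \<partial>hist phi ks (Suc t))"
    unfolding nn_integral_hist_Suc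
  proof (intro nn_integral_pmf_cong)
    fix h assume h: "h \<in> set_pmf (hist phi ks t)"
    let ?p = "lower_hist h"
    have "(\<integral>\<^sup>+h'. f (lower_hist h') * ennreal (door_survival phi ks j (Suc t) (lower_hist h')) \<partial>knock_step phi ks t h)
        = (\<integral>\<^sup>+h'. f (?p @ [last ?p]) * ennreal (1 - phi j (door_views ks j t ?p @ [last ?p])) \<partial>knock_step phi ks t h)"
      using door_survival_Suc_same[of ks t j, OF knock hist_facts(3)[OF h]]
      by (intro nn_integral_pmf_cong) (use lower_step[OF h] in simp)
    also have "\<dots> = \<Phi> ?p * ennreal (door_survival phi ks j t ?p)"
      using hazard(3)[OF h] by (simp add: measure_pmf.emeasure_space_1 \<Phi>_def mult.assoc)
    finally show "\<Phi> ?p * ennreal (door_survival phi ks j t ?p)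
        = (\<integral>\<^sup>+h'. f (lower_hist h') * ennreal (door_survival phi ks j (Suc t) (lower_hist h')) \<partial>knock_step phi ks t h)"
      by simp
  qed
  finally show ?thesis .
qed

text \<open>Conditionally on the history of the doors below j, door j is still closed with probability
  door_survival.\<close>

lemma survival_integral:
  fixes f :: "nat set list \<Rightarrow> ennreal"
  assumes "\<And>t. 1 \<le> ks t"
  shows "(\<integral>\<^sup>+h. f (lower_hist h) * indicator {h. j \<notin> last h} h \<partial>hist phi ks t)
    = (\<integral>\<^sup>+h. f (lower_hist h) * ennreal (door_survival phi ks j t (lower_hist h)) \<partial>hist phi ks t)"
proof (induction t arbitrary: f)
  case 0
  show ?case
    by (simp add: door_survival_def door_views_def phi0_def)
next
  case (Suc t)
  show ?case
  proof (cases "ks t = j")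
    case True
    then show ?thesis
      using Suc.IH by (rule survival_step_same)
  next
    case False
    then show ?thesis
      using assms Suc.IH by (rule survival_step_other)
  qed
qed

lemma door_survival_le_fund:
  assumes h: "h \<in> set_pmf (hist phi (round_robin d) (k*d))" and j: "1 \<le> j" "j \<le> d"
    and r: "r \<le> k" "{1..<j} \<subseteq> h ! (r*d)"
  shows "door_survival phi (round_robin d) j (k*d) (lower_hist h) \<le> fund phi j (k - r)"
proof -
  define views where "views = door_views (round_robin d) j (k*d) (lower_hist h)"
  have survival: "door_survival phi (round_robin d) j (k*d) (lower_hist h) = 1 - phi0 phi j views"
    unfolding door_survival_def views_def ..
  have "lower_hist h ! s = {1..<j}" if "r*d \<le> s" "s < k*d" for s
    using hist_nth_mono[OF h, of "r*d" s] r(2) that length_hist[OF h] by auto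
  then have "map ((!) (lower_hist h)) (filter (\<lambda>s. round_robin d s = j) [r*d..<k*d])
      = map (\<lambda>_. {1..<j}) (filter (\<lambda>s. round_robin d s = j) [r*d..<k*d])"
    by (intro map_cong) auto
  also have "\<dots> = replicate (k - r) {1..<j}"
    using length_filter_round_robin[OF j r(1)] by (simp add: map_replicate_const)
  finally have "suffix (replicate (k - r) {1..<j}) views"
    unfolding views_def using door_views_split[of "r*d" "k*d"] r(1) by (auto simp: suffix_def)
  moreover have "set views \<subseteq> Pow {1..<j}"
    using set_door_views[of "k*d" "lower_hist h"] set_proj_hist length_hist[OF h] unfolding views_def by force
  ultimately have "1 - phi0 phi j views \<le> fund phi j (k - r)"
  proof (cases "r = k")
    case True
    then show ?thesis
      using phi0_nonneg[OF \<open>set views \<subseteq> Pow {1..<j}\<close>] by (simp add: fund_def)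
  next
    case False
    then have "views \<noteq> []" "valid_seq j (replicate (k - r) {1..<j})"
      using r(1) suffix_length_le[OF \<open>suffix _ views\<close>] by (auto simp: valid_seq_def)
    then show ?thesis
      using phi_subseq_mono[of views] suffix_imp_subseq[OF \<open>suffix _ views\<close>] \<open>set views \<subseteq> _\<close> False
      by (simp add: fund_def phi0_def valid_seq_def)
  qed
  then show ?thesis
    unfolding survival .
qed

lemma round_weight_nonneg: "0 \<le> round_weight phi d j k h"
  by (simp add: round_weight_def fund_nonneg)

lemma door_survival_le_round_weight:
  assumes h: "h \<in> set_pmf (hist phi (round_robin d) (k*d))" and j: "1 \<le> j" "j \<le> d"
    and open_below: "{1..<j} \<subseteq> last h"
  shows "door_survival phi (round_robin d) j (k*d) (lower_hist h) \<le> round_weight phi d j k h"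
proof -
  define r where "r = (LEAST r. r \<le> k \<and> {1..<j} \<subseteq> h ! (r*d))"
  have "\<exists>r\<le>k. {1..<j} \<subseteq> h ! (r*d)"
    using open_below last_hist[OF h] by auto
  then have "r \<le> k" "{1..<j} \<subseteq> h ! (r*d)"
    unfolding r_def by (metis (mono_tags, lifting) LeastI)+
  then show ?thesis
    using door_survival_le_fund[OF h j] \<open>\<exists>r\<le>k. _\<close> by (simp add: round_weight_def r_def)
qed

lemma sum_round_weight_le_E_door:
  assumes "summable (fund phi j)"
  shows "(\<Sum>k<K. round_weight phi d j k h) \<le> E_door phi j"
proof (cases "\<exists>r. {1..<j} \<subseteq> h ! (r*d)")
  case True
  define r0 where "r0 = (LEAST r. {1..<j} \<subseteq> h ! (r*d))"
  have r0: "{1..<j} \<subseteq> h ! (r0*d)" "\<And>r. {1..<j} \<subseteq> h ! (r*d) \<Longrightarrow> r0 \<le> r"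
    using LeastI_ex[OF True] Least_le unfolding r0_def by auto
  have "round_weight phi d j k h = (if r0 \<le> k then fund phi j (k - r0) else 0)" for k
  proof (cases "r0 \<le> k")
    case True
    then have "(LEAST r. r \<le> k \<and> {1..<j} \<subseteq> h ! (r*d)) = r0"
      using r0 by (intro Least_equality) auto
    then show ?thesis
      using True r0 by (auto simp: round_weight_def)
  next
    case False
    then have "\<not> (\<exists>r\<le>k. {1..<j} \<subseteq> h ! (r*d))"
      using r0(2) le_trans by blast
    then show ?thesis
      using False unfolding round_weight_def by (simp only: if_False)
  qed
  then have "(\<Sum>k<K. round_weight phi d j k h) = (\<Sum>k<K. if r0 \<le> k then fund phi j (k - r0) else 0)"
    by simp
  also have "\<dots> \<le> E_door phi j"
    unfolding E_door_def using fund_nonneg assms by (rule sum_shifted_le_suminf)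
  finally show ?thesis .
next
  case False
  then show ?thesis
    using E_door_ge_1[OF assms] by (simp add: round_weight_def)
qed

lemma closed_prob_le_round_weight:
  assumes j: "1 \<le> j" "j \<le> d"
  shows "emeasure (hist phi (round_robin d) (k*d)) {h. {1..<j} \<subseteq> last h \<and> j \<notin> last h}
    \<le> (\<integral>\<^sup>+h. ennreal (round_weight phi d j k h) \<partial>hist phi (round_robin d) (k*d))"
proof -
  let ?M = "hist phi (round_robin d) (k*d)"
  let ?open_below = "\<lambda>p. indicator {p. {1..<j} \<subseteq> last p} p :: ennreal"
  have "emeasure ?M {h. {1..<j} \<subseteq> last h \<and> j \<notin> last h}
      = (\<integral>\<^sup>+h. indicator {h. {1..<j} \<subseteq> last h \<and> j \<notin> last h} h \<partial>?M)"
    by simp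
  also have "\<dots> = (\<integral>\<^sup>+h. ?open_below (lower_hist h) * indicator {h. j \<notin> last h} h \<partial>?M)"
  proof (intro nn_integral_pmf_cong)
    fix h assume "h \<in> set_pmf ?M"
    then have "h \<noteq> []"
      using length_hist by fastforce
    then show "indicator {h. {1..<j} \<subseteq> last h \<and> j \<notin> last h} h
        = ?open_below (lower_hist h) * indicator {h. j \<notin> last h} h"
      by (auto split: split_indicator)
  qed
  also have "\<dots> = (\<integral>\<^sup>+h. ?open_below (lower_hist h) * ennreal (door_survival phi (round_robin d) j (k*d) (lower_hist h)) \<partial>?M)"
    by (rule survival_integral) (simp add: round_robin_def)
  also have "\<dots> \<le> (\<integral>\<^sup>+h. ennreal (round_weight phi d j k h) \<partial>?M)"
  proof (intro nn_integral_pmf_mono)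
    fix h assume h: "h \<in> set_pmf ?M"
    then have "h \<noteq> []"
      using length_hist by fastforce
    then show "?open_below (lower_hist h) * ennreal (door_survival phi (round_robin d) j (k*d) (lower_hist h))
        \<le> ennreal (round_weight phi d j k h)"
      using door_survival_le_round_weight[OF h j] round_weight_nonneg
      by (auto simp: ennreal_leI split: split_indicator)
  qed
  finally show ?thesis .
qed

lemma door_closed_sum_le_E_door:
  assumes "summable (fund phi j)" and j: "1 \<le> j" "j \<le> d"
  shows "(\<Sum>k<K. emeasure (hist phi (round_robin d) (k*d)) {h. {1..<j} \<subseteq> last h \<and> j \<notin> last h})
    \<le> ennreal (E_door phi j)"
proof -
  let ?M = "hist phi (round_robin d) (K*d)"
  have weight_later: "(\<integral>\<^sup>+h. ennreal (round_weight phi d j k h) \<partial>hist phi (round_robin d) (k*d))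
      = (\<integral>\<^sup>+h. ennreal (round_weight phi d j k h) \<partial>?M)" if "k < K" for k
  proof -
    have "hist phi (round_robin d) (k*d) = map_pmf (take (Suc (k*d))) ?M"
      using that by (simp add: map_pmf_take_hist)
    then show ?thesis
      by (simp add: round_weight_take)
  qed
  have "(\<Sum>k<K. emeasure (hist phi (round_robin d) (k*d)) {h. {1..<j} \<subseteq> last h \<and> j \<notin> last h})
      \<le> (\<Sum>k<K. \<integral>\<^sup>+h. ennreal (round_weight phi d j k h) \<partial>?M)"
  proof (rule sum_mono)
    fix k assume "k \<in> {..<K}"
    then show "emeasure (hist phi (round_robin d) (k*d)) {h. {1..<j} \<subseteq> last h \<and> j \<notin> last h}
        \<le> (\<integral>\<^sup>+h. ennreal (round_weight phi d j k h) \<partial>?M)"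
      using closed_prob_le_round_weight[OF j, of k] weight_later[of k] by simp
  qed
  also have "\<dots> = (\<integral>\<^sup>+h. ennreal (\<Sum>k<K. round_weight phi d j k h) \<partial>?M)"
    by (simp add: nn_integral_sum[symmetric] sum_ennreal round_weight_nonneg)
  also have "\<dots> \<le> (\<integral>\<^sup>+h. ennreal (E_door phi j) \<partial>?M)"
    using sum_round_weight_le_E_door[OF assms(1)] by (intro nn_integral_mono ennreal_leI)
  also have "\<dots> = ennreal (E_door phi j)"
    by (simp add: measure_pmf.emeasure_space_1)
  finally show ?thesis .
qed

end

section \<open>The price bound\<close>

lemma config_door_law:
  assumes "config d phi" "j \<in> {1..d}"
  shows "door_law phi j" "summable (fund phi j)"
  using assms unfolding config_def door_law_def by blast+

lemma config_E_door_ge_1: "config d phi \<Longrightarrow> j \<in> {1..d} \<Longrightarrow> 1 \<le> E_door phi j"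
  using door_law.E_door_ge_1 config_door_law by blast

lemma sum_E_door_pos:
  assumes "config d phi" "0 < d"
  shows "0 < (\<Sum>i=1..d. E_door phi i)"
proof -
  have "0 \<le> E_door phi i" if "i \<in> {1..d}" for i
    using config_E_door_ge_1[OF assms(1) that] by linarith
  then have "E_door phi 1 \<le> (\<Sum>i=1..d. E_door phi i)"
    using assms(2) by (intro member_le_sum) auto
  then show ?thesis
    using config_E_door_ge_1[OF assms(1), of 1] assms(2) by simp
qed

lemma not_open_below_sum_le:
  assumes cfg: "config d phi" and "j \<le> Suc d"
  shows "(\<Sum>k<K. emeasure (hist phi (round_robin d) (k*d)) {h. \<not> {1..<j} \<subseteq> last h})
    \<le> ennreal (\<Sum>i\<in>{1..<j}. E_door phi i)"
  using assms(2)
proof (induction j)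
  case (Suc j)
  show ?case
  proof (cases "j = 0")
    case False
    then have j: "1 \<le> j" "j \<le> d"
      using Suc.prems by auto
    interpret door_law phi j
      using config_door_law(1)[OF cfg] j by simp
    let ?M = "\<lambda>k. hist phi (round_robin d) (k*d)"
    have "{h. \<not> {1..<Suc j} \<subseteq> last h} \<subseteq> {h. \<not> {1..<j} \<subseteq> last h} \<union> {h. {1..<j} \<subseteq> last h \<and> j \<notin> last h}"
      using j by (auto simp: atLeastLessThanSuc)
    then have "(\<Sum>k<K. emeasure (?M k) {h. \<not> {1..<Suc j} \<subseteq> last h})
        \<le> (\<Sum>k<K. emeasure (?M k) {h. \<not> {1..<j} \<subseteq> last h}
             + emeasure (?M k) {h. {1..<j} \<subseteq> last h \<and> j \<notin> last h})"
      by (intro sum_mono order.trans[OF emeasure_mono emeasure_subadditive]) auto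
    also have "\<dots> \<le> ennreal (\<Sum>i\<in>{1..<j}. E_door phi i) + ennreal (E_door phi j)"
      unfolding sum.distrib using Suc j config_door_law(2)[OF cfg]
      by (intro add_mono door_closed_sum_le_E_door) auto
    also have "\<dots> = ennreal (\<Sum>i\<in>{1..<Suc j}. E_door phi i)"
    proof -
      have nonneg: "0 \<le> E_door phi i" if "i \<in> {1..d}" for i
        using config_E_door_ge_1[OF cfg that] by linarith
      then have "0 \<le> (\<Sum>i\<in>{1..<j}. E_door phi i)" "0 \<le> E_door phi j"
        using j by (auto intro!: sum_nonneg)
      then show ?thesis
        using j by (simp add: atLeastLessThanSuc ennreal_plus add.commute)
    qed
    finally show ?thesis .
  qed simp
qed simp

lemma not_all_open_le_round_start:
  assumes "0 < d"
  shows "ennreal (measure_pmf.prob (hist phi (round_robin d) t) {h. last h \<noteq> {1..d}})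
    \<le> emeasure (hist phi (round_robin d) (t div d * d)) {h. \<not> {1..<Suc d} \<subseteq> last h}"
proof -
  define s where "s = t div d * d"
  let ?M = "hist phi (round_robin d) t"
  have "s \<le> t"
    unfolding s_def by (rule div_times_less_eq_dividend)
  have "emeasure ?M {h. last h \<noteq> {1..d}} \<le> emeasure ?M {h. \<not> {1..<Suc d} \<subseteq> last (take (Suc s) h)}"
  proof (rule emeasure_mono_AE[OF AE_pmfI])
    fix h assume h: "h \<in> set_pmf ?M"
    have "last h \<subseteq> {1..d}"
      using last_hist_subset[OF h] round_robin_range[OF assms] by blast
    moreover have "last (take (Suc s) h) = h ! s" "h ! s \<subseteq> last h"
      using length_hist[OF h] last_hist[OF h] hist_nth_mono[OF h \<open>s \<le> t\<close>] \<open>s \<le> t\<close>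
      by (simp_all add: last_eq_nth)
    ultimately show "h \<in> {h. last h \<noteq> {1..d}} \<longrightarrow> h \<in> {h. \<not> {1..<Suc d} \<subseteq> last (take (Suc s) h)}"
      by (auto simp: atLeastLessThanSuc_atLeastAtMost)
  qed simp
  also have "\<dots> = emeasure (map_pmf (take (Suc s)) ?M) {h. \<not> {1..<Suc d} \<subseteq> last h}"
    by (simp add: vimage_def)
  also have "\<dots> = emeasure (hist phi (round_robin d) s) {h. \<not> {1..<Suc d} \<subseteq> last h}"
    using \<open>s \<le> t\<close> by (simp only: map_pmf_take_hist)
  finally show ?thesis
    unfolding s_def by (simp add: measure_pmf.emeasure_eq_measure)
qed

lemma exp_time_round_robin_le:
  assumes cfg: "config d phi" and "0 < d"
  shows "exp_time d phi (round_robin d) \<le> of_nat d * ennreal (\<Sum>i=1..d. E_door phi i)"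
  unfolding exp_time_def
proof (rule suminf_le_const[OF summableI])
  fix n
  let ?P = "\<lambda>t. ennreal (measure_pmf.prob (hist phi (round_robin d) t) {h. last h \<noteq> {1..d}})"
  let ?B = "\<lambda>k. emeasure (hist phi (round_robin d) (k*d)) {h. \<not> {1..<Suc d} \<subseteq> last h}"
  have "(\<Sum>t<n. ?P t) \<le> (\<Sum>t<n*d. ?P t)"
    using \<open>0 < d\<close> by (intro sum_mono2) auto
  also have "\<dots> \<le> (\<Sum>t<n*d. ?B (t div d))"
    using not_all_open_le_round_start[OF \<open>0 < d\<close>] by (intro sum_mono) simp
  also have "\<dots> = of_nat d * (\<Sum>k<n. ?B k)"
    by (rule sum_lessThan_mult_div)
  also have "\<dots> \<le> of_nat d * ennreal (\<Sum>i=1..d. E_door phi i)"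
    using not_open_below_sum_le[OF cfg, of "Suc d" n]
    by (intro mult_left_mono) (simp_all add: atLeastLessThanSuc_atLeastAtMost)
  finally show "(\<Sum>t<n. ?P t) \<le> of_nat d * ennreal (\<Sum>i=1..d. E_door phi i)" .
qed

theorem mainTheorem7:
  fixes d :: nat and phi :: "nat \<Rightarrow> nat set list \<Rightarrow> real"
  assumes "d \<ge> 2" and "config d phi"
  shows "price d phi \<le> of_nat d"
proof -
  define S where "S = (\<Sum>i=1..d. E_door phi i)"
  have "0 < d"
    using assms(1) by simp
  then have "0 < S"
    unfolding S_def using assms(2) by (intro sum_E_door_pos)
  have "opt_time d phi \<le> exp_time d phi (round_robin d)"
    unfolding opt_time_def using round_robin_range[OF \<open>0 < d\<close>] by (intro INF_lower) simp
  also have "\<dots> \<le> of_nat d * ennreal S"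
    unfolding S_def using assms(2) \<open>0 < d\<close> by (rule exp_time_round_robin_le)
  finally have "price d phi \<le> (of_nat d * ennreal S) / ennreal S"
    unfolding price_def S_def[symmetric] by (rule divide_right_mono_ennreal)
  also have "\<dots> = of_nat d"
    using \<open>0 < S\<close> by (intro ennreal_mult_divide_eq) auto
  finally show ?thesis .
qed

end
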